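(* Let $g \in L^2(\mathbb{R})$ be a real-valued function with $\|g\|_2 = 1$. Let $\alpha = V_g g(0,1)$ and $$A = \begin{bmatrix} 1 & \alpha \\ \overline{\alpha} & 1 \end{bmatrix}, \qquad u(a,b) = \begin{bmatrix} V_g g(a,b) \\ V_g g(a, b-1)\end{bmatrix}, \qquad F(a,b) = \langle A^{-1} u(a,b), u(a,b)\rangle .$$ Then $F(a,b) = F(a, 1-b)$ for all $(a,b) \in \mathbb{Z}\times\mathbb{R}$ with $b \neq 1/2$, and $F(-a, 1/2) = F(a, 1/2)$ for all $a \in \mathbb{Z}$.
   Context: The short-time Fourier transform of $f \in L^2(\mathbb{R})$ with window $g\in L^2(\mathbb{R})$ is $V_g f(x,y) = \int_{\mathbb{R}} f(t)\overline{g(t-x)} e^{-2\pi i y t}\,dt$. The inner product on $\mathbb{C}^2$ is $\langle v, w\rangle = \sum_j v_j \overline{w_j}$. The matrix $A$ is the Gramian of $\{g, e^{2\pi i\cdot}g\}$, which are linearly independent, so $|\alpha|<1$ and $A$ is invertible. *)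

theory Defs
  imports "HOL-Analysis.Analysis"
begin

definition stft :: "(real \<Rightarrow> complex) \<Rightarrow> (real \<Rightarrow> complex) \<Rightarrow> real \<Rightarrow> real \<Rightarrow> complex" where
  "stft g f x y = (LINT t|lborel. f t * cnj (g (t - x)) * exp (- (2 * pi * \<i> * y * t)))"

definition cinner2 :: "complex^2 \<Rightarrow> complex^2 \<Rightarrow> complex" where
  "cinner2 v w = (\<Sum>j\<in>UNIV. v $ j * cnj (w $ j))"

definition alpha_g :: "(real \<Rightarrow> real) \<Rightarrow> complex" where
  "alpha_g g = stft (\<lambda>t. complex_of_real (g t)) (\<lambda>t. complex_of_real (g t)) 0 1"

definition A_g :: "(real \<Rightarrow> real) \<Rightarrow> complex^2^2" where
  "A_g g = vector [vector [1, alpha_g g], vector [cnj (alpha_g g), 1]]"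

definition u_g :: "(real \<Rightarrow> real) \<Rightarrow> real \<Rightarrow> real \<Rightarrow> complex^2" where
  "u_g g a b = vector [stft (\<lambda>t. complex_of_real (g t)) (\<lambda>t. complex_of_real (g t)) a b,
                       stft (\<lambda>t. complex_of_real (g t)) (\<lambda>t. complex_of_real (g t)) a (b - 1)]"

definition F_g :: "(real \<Rightarrow> real) \<Rightarrow> real \<Rightarrow> real \<Rightarrow> complex" where
  "F_g g a b = cinner2 (matrix_inv (A_g g) *v u_g g a b) (u_g g a b)"

end

theory Submission
  imports Defs
begin

text \<open>Write \<open>V = V\<^sub>g g\<close>. For real \<open>g\<close>, conjugation flips the frequency, so
  \<open>u(a, 1 - b)\<close> is \<open>u(a, b)\<close> with its entries conjugated and swapped; as \<open>A\<^sup>-\<^sup>1\<close> has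
  equal diagonal entries, the Hermitian form \<open>F\<close> does not see this. The substitution
  \<open>t \<mapsto> t - a\<close> gives \<open>V(-a, b) = exp(2\<pi>iab) V(a, b)\<close>, and for integer \<open>a\<close> this phase is
  the same at \<open>b = 1/2\<close> and \<open>b = -1/2\<close>, so \<open>u(-a, 1/2)\<close> is a unimodular multiple of
  \<open>u(a, 1/2)\<close>. Finally \<open>A\<close> is invertible because \<open>|\<alpha>| \<noteq> 1\<close>: equality in
  \<open>|\<integral> g(t)\<^sup>2 exp(-2\<pi>it) dt| \<le> \<integral> g\<^sup>2 = 1\<close> would force \<open>exp(-2\<pi>it)\<close> to be constant
  wherever \<open>g \<noteq> 0\<close>, but each value is taken only on a countable set.\<close>

lemma vector2_eq_iff: "(v::'a^2) = w \<longleftrightarrow> v$1 = w$1 \<and> v$2 = w$2"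
  by (simp add: vec_eq_iff forall_2)

lemma matrix_inv_eqI:
  fixes A :: "'a::semiring_1^'n^'m"
  assumes AB: "A ** B = mat 1" and BA: "B ** A = mat 1"
  shows "matrix_inv A = B"
proof -
  have inv: "matrix_inv A ** A = mat 1"
    unfolding matrix_inv_def by (rule someI2[of _ B]) (use AB BA in auto)
  have "matrix_inv A = matrix_inv A ** (A ** B)" by (simp add: AB)
  also have "\<dots> = (matrix_inv A ** A) ** B" by (simp add: matrix_mul_assoc)
  finally show ?thesis by (simp add: inv)
qed

lemma matrix_inv_2x2:
  fixes a b c d :: "'a::field"
  assumes det: "a * d - b * c \<noteq> 0"
  shows "matrix_inv (vector [vector [a, b], vector [c, d]] :: 'a^2^2)
       = vector [vector [d / (a * d - b * c), - b / (a * d - b * c)],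
                 vector [- c / (a * d - b * c), a / (a * d - b * c)]]"
proof -
  have "(a * d - b * c) * (a * d - b * c) \<noteq> 0" using det by simp
  then have "a * (a * (d * d)) + b * (b * (c * c)) \<noteq> a * (b * (c * (d * 2)))"
    by (simp add: algebra_simps)
  then show ?thesis
    using det
    by (intro matrix_inv_eqI) (auto simp: vector2_eq_iff matrix_matrix_mult_def sum_2 mat_def field_simps)
qed

lemma cinner2_swap_cnj:
  fixes M :: "complex^2^2"
  assumes "M$1$1 = M$2$2"
  shows "cinner2 (M *v vector [cnj (v$2), cnj (v$1)]) (vector [cnj (v$2), cnj (v$1)])
       = cinner2 (M *v v) v"
  using assms by (simp add: cinner2_def matrix_vector_mult_def sum_2 algebra_simps)

lemma cinner2_scale:
  fixes M :: "complex^2^2"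
  shows "cinner2 (M *v (e *s u)) (e *s u) = (e * cnj e) * cinner2 (M *v u) u"
  by (simp add: cinner2_def matrix_vector_mult_def sum_2 algebra_simps)

lemma stft_real_cnj:
  fixes f g :: "real \<Rightarrow> real"
  shows "cnj (stft (\<lambda>t. of_real (g t)) (\<lambda>t. of_real (f t)) a b)
       = stft (\<lambda>t. of_real (g t)) (\<lambda>t. of_real (f t)) a (- b)"
proof -
  have "cnj (stft (\<lambda>t. of_real (g t)) (\<lambda>t. of_real (f t)) a b)
      = (LINT t|lborel. cnj (of_real (f t) * cnj (of_real (g (t - a))) * exp (- (2 * pi * \<i> * b * t))))"
    unfolding stft_def by (rule Bochner_Integration.integral_cnj[symmetric])
  also have "\<dots> = stft (\<lambda>t. of_real (g t)) (\<lambda>t. of_real (f t)) a (- b)"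
    unfolding stft_def by (rule Bochner_Integration.integral_cong) (auto simp: exp_cnj)
  finally show ?thesis .
qed

lemma stft_real_uminus:
  fixes g :: "real \<Rightarrow> real"
  defines "G \<equiv> \<lambda>t. complex_of_real (g t)"
  shows "stft G G (- a) b = exp (2 * pi * \<i> * b * a) * stft G G a b"
proof -
  have "stft G G (- a) b = (LINT x|lborel. G (x - a) * cnj (G x) * exp (- (2 * pi * \<i> * b * (x - a))))"
    unfolding stft_def
    using lborel_integral_real_affine[of 1 "\<lambda>t. G t * cnj (G (t + a)) * exp (- (2 * pi * \<i> * b * t))" "- a"]
    by simp
  also have "\<dots> = (LINT x|lborel. exp (2 * pi * \<i> * b * a) * (G x * cnj (G (x - a)) * exp (- (2 * pi * \<i> * b * x))))"
    by (rule Bochner_Integration.integral_cong)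
       (simp_all add: G_def exp_diff[symmetric] exp_add[symmetric] algebra_simps)
  also have "\<dots> = exp (2 * pi * \<i> * b * a) * stft G G a b"
    unfolding stft_def by simp
  finally show ?thesis .
qed

lemma complex_eq_1_if_Re_eq_1:
  assumes "Re z = 1" and "norm z \<le> 1"
  shows "z = 1"
proof -
  have "(Re z)\<^sup>2 + (Im z)\<^sup>2 \<le> 1"
    using assms(2) by (simp add: cmod_def)
  then show ?thesis using assms(1) by (simp add: complex_eq_iff)
qed

lemma AE_eq_1_if_Re_integral_eq:
  fixes h :: "'a \<Rightarrow> real" and \<phi> :: "'a \<Rightarrow> complex"
  assumes h: "integrable M h" "\<And>t. 0 \<le> h t"
    and \<phi>: "\<phi> \<in> borel_measurable M" "\<And>t. norm (\<phi> t) \<le> 1"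
    and eq: "Re (LINT t|M. of_real (h t) * \<phi> t) = integral\<^sup>L M h"
  shows "AE t in M. h t = 0 \<or> \<phi> t = 1"
proof -
  have "integrable M (\<lambda>t. of_real (h t) * \<phi> t)"
  proof (rule Bochner_Integration.integrable_bound)
    show "integrable M h" by (fact h(1))
    show "(\<lambda>t. of_real (h t) * \<phi> t) \<in> borel_measurable M"
      using h(1) \<phi>(1) by measurable
    show "AE t in M. norm (of_real (h t) * \<phi> t) \<le> norm (h t)"
      using h(2) \<phi>(2) by (simp add: norm_mult mult_left_le)
  qed
  note int = this
  have int_Re: "integrable M (\<lambda>t. h t * Re (\<phi> t))"
    using integrable_Re[OF int] by simp
  have "Re (LINT t|M. of_real (h t) * \<phi> t) = (LINT t|M. Re (of_real (h t) * \<phi> t))"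
    by (rule integral_Re[OF int, symmetric])
  also have "\<dots> = (LINT t|M. h t * Re (\<phi> t))" by simp
  finally have Re_int: "Re (LINT t|M. of_real (h t) * \<phi> t) = (LINT t|M. h t * Re (\<phi> t))" .
  define d where "d = (\<lambda>t. h t - h t * Re (\<phi> t))"
  have d_nonneg: "0 \<le> d t" for t
    using h(2)[of t] complex_Re_le_cmod[of "\<phi> t"] \<phi>(2)[of t]
    by (simp add: d_def mult_left_le flip: right_diff_distrib)
  have "integrable M d" and "integral\<^sup>L M d = 0"
    using h(1) int_Re eq Re_int by (simp_all add: d_def)
  then have "AE t in M. d t = 0"
    using integral_nonneg_eq_0_iff_AE d_nonneg by blast
  then show ?thesis
  proof eventually_elim
    case (elim t)
    then have "h t = 0 \<or> Re (\<phi> t) = 1" by (simp add: d_def flip: right_diff_distrib)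
    then show ?case using complex_eq_1_if_Re_eq_1 \<phi>(2) by blast
  qed
qed

lemma countable_exp_eq:
  "countable {t::real. w * exp (- (2 * pi * \<i> * t)) = 1}" (is "countable ?S")
proof (cases "?S = {}")
  case False
  then obtain s where s: "s \<in> ?S" by auto
  have "?S \<subseteq> range (\<lambda>n::int. s - of_int n)"
  proof
    fix t assume t: "t \<in> ?S"
    have "w \<noteq> 0" using s by auto
    moreover have "w * exp (- (2 * pi * \<i> * t)) = w * exp (- (2 * pi * \<i> * s))"
      using s t by simp
    ultimately have "exp (- (2 * pi * \<i> * t)) = exp (- (2 * pi * \<i> * s))" by simp
    then obtain n :: int where "- (2 * pi * \<i> * t) = - (2 * pi * \<i> * s) + (of_int (2 * n) * pi) * \<i>"
      unfolding exp_eq by blast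
    then have "pi * (2 * (s - t - of_int n)) = 0"
      by (auto simp: complex_eq_iff algebra_simps)
    then have "t = s - of_int n" by simp
    then show "t \<in> range (\<lambda>n::int. s - of_int n)" by blast
  qed
  then show ?thesis by (rule countable_subset) simp
qed simp

lemma alpha_g_eq_integral:
  "alpha_g g = (LINT t|lborel. of_real ((g t)\<^sup>2) * exp (- (2 * pi * \<i> * t)))"
  unfolding alpha_g_def stft_def
  by (rule Bochner_Integration.integral_cong) (auto simp: power2_eq_square)

lemma norm_alpha_g_neq_1:
  fixes g :: "real \<Rightarrow> real"
  assumes "g \<in> borel_measurable lborel"
    and "integrable lborel (\<lambda>t. (g t)\<^sup>2)"
    and norm1: "(LINT t|lborel. (g t)\<^sup>2) = 1"
  shows "norm (alpha_g g) \<noteq> 1"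
proof
  assume unit: "norm (alpha_g g) = 1"
  define \<phi> where "\<phi> t = cnj (alpha_g g) * exp (- (2 * pi * \<i> * of_real t))" for t :: real
  have "(LINT t|lborel. of_real ((g t)\<^sup>2) * \<phi> t)
      = (LINT t|lborel. cnj (alpha_g g) * (of_real ((g t)\<^sup>2) * exp (- (2 * pi * \<i> * t))))"
    by (simp add: \<phi>_def algebra_simps)
  also have "\<dots> = cnj (alpha_g g) * alpha_g g"
    by (simp only: integral_mult_right_zero alpha_g_eq_integral)
  also have "\<dots> = of_real ((norm (alpha_g g))\<^sup>2)"
    by (metis complex_norm_square mult.commute)
  also have "\<dots> = of_real (LINT t|lborel. (g t)\<^sup>2)"
    using unit norm1 by simp
  finally have "AE t in lborel. (g t)\<^sup>2 = 0 \<or> \<phi> t = 1"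
    using assms unit by (intro AE_eq_1_if_Re_integral_eq) (auto simp: \<phi>_def norm_mult)
  moreover have "AE t in lborel. \<phi> t \<noteq> 1"
    using countable_exp_eq[of "cnj (alpha_g g)"]
    by (intro AE_not_in[of "{t. \<phi> t = 1}", simplified] countable_imp_null_set_lborel)
       (simp add: \<phi>_def)
  ultimately have "AE t in lborel. (g t)\<^sup>2 = 0" by eventually_elim auto
  then have "(LINT t|lborel. (g t)\<^sup>2) = 0" by (rule integral_eq_zero_AE)
  then show False using norm1 by simp
qed

lemma u_g_reflect: "u_g g a (1 - b) = vector [cnj (u_g g a b $ 2), cnj (u_g g a b $ 1)]"
  unfolding u_g_def by (simp add: stft_real_cnj)

lemma u_g_uminus_half:
  fixes a :: int
  shows "u_g g (- a) (1/2) = exp (pi * \<i> * a) *s u_g g a (1/2)"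
proof -
  have "exp (2 * pi * \<i> * of_real (1/2 - 1) * a) = exp (pi * \<i> * a) * exp (- (2 * a * pi * \<i>))"
    by (simp add: exp_add[symmetric] algebra_simps)
  also have "exp (- (2 * a * pi * \<i>)) = 1"
    using exp_integer_2pi[of "- of_int a"] by simp
  finally have "exp (2 * pi * \<i> * of_real (1/2 - 1) * a) = exp (pi * \<i> * a)" by simp
  then show ?thesis
    unfolding u_g_def vector2_eq_iff
    by (simp add: stft_real_uminus[where a = "of_int a", simplified] mult.commute[of _ pi])
qed

lemma F_g_reflect:
  assumes "norm (alpha_g g) \<noteq> 1"
  shows "F_g g a (1 - b) = F_g g a b"
proof -
  have "(norm (alpha_g g))\<^sup>2 \<noteq> 1"
    using assms by (simp add: abs_square_eq_1)
  then have "1 * 1 - alpha_g g * cnj (alpha_g g) \<noteq> 0"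
    by (metis complex_norm_square of_real_eq_1_iff right_minus_eq mult_1)
  then have "matrix_inv (A_g g) $ 1 $ 1 = matrix_inv (A_g g) $ 2 $ 2"
    unfolding A_g_def by (simp add: matrix_inv_2x2)
  then show ?thesis
    unfolding F_g_def u_g_reflect
    by (rule cinner2_swap_cnj)
qed

lemma F_g_uminus_half:
  fixes a :: int
  shows "F_g g (- a) (1/2) = F_g g a (1/2)"
proof -
  have "exp (pi * \<i> * a) * cnj (exp (pi * \<i> * a)) = 1"
    by (simp add: exp_cnj exp_add[symmetric])
  then show ?thesis
    unfolding F_g_def u_g_uminus_half cinner2_scale by simp
qed

theorem lemma2p6:
  fixes g :: "real \<Rightarrow> real"
  assumes meas: "g \<in> borel_measurable lborel"
    and sq: "integrable lborel (\<lambda>t. (g t)\<^sup>2)"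
    and norm1: "(LINT t|lborel. (g t)\<^sup>2) = 1"
  shows "(\<forall>a::int. \<forall>b::real. b \<noteq> 1/2 \<longrightarrow> F_g g (of_int a) b = F_g g (of_int a) (1 - b))
       \<and> (\<forall>a::int. F_g g (of_int (- a)) (1/2) = F_g g (of_int a) (1/2))"
  using F_g_reflect[OF norm_alpha_g_neq_1[OF assms]] F_g_uminus_half by simp

end
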